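(* Let $F\in\mathbb{R}[x_1,\dots,x_n]$ be a form that is indefinite on $\mathbb{T}_n=\{(x_1,\dots,x_n): x_i\ge0,\ \sum_i x_i=1\}$, i.e., there exist $X,Y\in\mathbb{T}_n$ with $F(X)>0$ and $F(Y)<0$. Then the sequence of sets $\{\mathrm{SDS}^{(m)}(F)\}_{m\ge1}$ is negatively terminating, i.e., there exist a positive integer $k$ and a form $G\in\mathrm{SDS}^{(k)}(F)$ with $G(1,1,\dots,1)<0$.
   Context: $W_n$ is the $n\times n$ matrix with $(W_n)_{ij}=1/j$ for $i\le j$ and $0$ for $i>j$. For a permutation $[k_1\cdots k_n]$ of $1,\dots,n$, $P_{[k_1\cdots k_n]}$ is the permutation matrix with $1$ in positions $(i,k_i)$ and $0$ elsewhere, and $B_{[k_1\cdots k_n]}=P_{[k_1\cdots k_n]}W_n$; $PW_n$ denotes the set of these $n!$ matrices. For $m\ge1$, $\mathrm{SDS}^{(m)}(F)$ is the set of forms $F(B_{[\alpha_1]}B_{[\alpha_2]}\cdots B_{[\alpha_m]}X^{\mathrm{Tr}})$, $X=(x_1,\dots,x_n)$, as $B_{[\alpha_1]},\dots,B_{[\alpha_m]}$ range independently over $PW_n$. *)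

theory Defs
  imports Complex_Main "HOL-Combinatorics.Permutations"
begin

(* Vectors in R^n are represented as functions nat => real, coordinates 0..n-1
   (index i here corresponds to index i+1 in the paper). *)

definition W :: "nat \<Rightarrow> nat \<Rightarrow> real" where
  "W i j = (if i \<le> j then 1 / real (j + 1) else 0)"

(* B_[k] = P_[k] W_n, with (P_[k])_{i,k_i} = 1, so (B_[k])_{ij} = (W_n)_{k_i, j};
   here the permutation is p :: nat => nat permuting {..<n}. Result: B_[p] x. *)
definition Bmul :: "nat \<Rightarrow> (nat \<Rightarrow> nat) \<Rightarrow> (nat \<Rightarrow> real) \<Rightarrow> (nat \<Rightarrow> real)" where
  "Bmul n p x = (\<lambda>i. if i < n then (\<Sum>j<n. W (p i) j * x j) else 0)"

definition sds_apply :: "nat \<Rightarrow> (nat \<Rightarrow> nat) list \<Rightarrow> (nat \<Rightarrow> real) \<Rightarrow> (nat \<Rightarrow> real)" where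
  "sds_apply n ps x = foldr (Bmul n) ps x"

definition is_form :: "nat \<Rightarrow> nat \<Rightarrow> ((nat \<Rightarrow> real) \<Rightarrow> real) \<Rightarrow> bool" where
  "is_form n d F \<longleftrightarrow> (\<exists>(S :: (nat \<Rightarrow> nat) set) (c :: (nat \<Rightarrow> nat) \<Rightarrow> real).
      finite S \<and> (\<forall>\<alpha>\<in>S. (\<forall>i\<ge>n. \<alpha> i = 0) \<and> (\<Sum>i<n. \<alpha> i) = d) \<and>
      (\<forall>x. F x = (\<Sum>\<alpha>\<in>S. c \<alpha> * (\<Prod>i<n. x i ^ \<alpha> i))))"

definition simplex :: "nat \<Rightarrow> (nat \<Rightarrow> real) set" where
  "simplex n = {x. (\<forall>i<n. 0 \<le> x i) \<and> (\<Sum>i<n. x i) = 1 \<and> (\<forall>i\<ge>n. x i = 0)}"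

definition SDS :: "nat \<Rightarrow> nat \<Rightarrow> ((nat \<Rightarrow> real) \<Rightarrow> real) \<Rightarrow> ((nat \<Rightarrow> real) \<Rightarrow> real) set" where
  "SDS n m F = {G. \<exists>ps. length ps = m \<and> (\<forall>p\<in>set ps. p permutes {..<n}) \<and>
                       G = (\<lambda>x. F (sds_apply n ps x))}"

end

theory Submission
  imports Defs
begin

text \<open>Every column of \<open>W\<^sub>n\<close> sums to 1, so each \<open>B\<^sub>p\<close> preserves coordinate sums; the first row
  of \<open>W\<^sub>n\<close> is bounded below by \<open>1/n\<close>, which makes \<open>B\<^sub>p\<close> a strict contraction, with ratio
  \<open>1 - 1/n\<close>, in the \<open>\<ell>\<^sub>1\<close> distance between vectors of equal coordinate sum. Moreover \<open>B\<^sub>p\<close>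
  maps \<open>\<T>\<^sub>n\<close> onto \<open>\<T>\<^sub>n\<close>: for a suitable \<open>p\<close> the preimage of a point is read off from the
  differences of its coordinates sorted decreasingly. Hence a point \<open>Y\<close> with \<open>F(Y) < 0\<close> is the
  image of some \<open>V\<^sub>m \<in> \<T>\<^sub>n\<close> under a product of \<open>m\<close> factors \<open>B\<^sub>p\<close>, and the image of the barycenter
  under the same product is within \<open>2(1 - 1/n)\<^sup>m\<close> of \<open>Y\<close>. By continuity \<open>F\<close> is negative there
  for large \<open>m\<close>, and by homogeneity so is the corresponding form at \<open>(1,\<dots>,1)\<close>.\<close>

lemma W_column_sum: "j < n \<Longrightarrow> (\<Sum>k<n. W k j) = 1"
proof -
  assume j: "j < n"
  have "(\<Sum>k<n. W k j) = (\<Sum>k\<le>j. 1 / real (j + 1))"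
    unfolding W_def by (rule sum.mono_neutral_cong_right) (use j in auto)
  then show ?thesis by simp
qed

lemma W_first_row_ge: "j < n \<Longrightarrow> 1 / real n \<le> W 0 j"
  by (simp add: W_def frac_le)

lemma sum_Bmul_permuted_rows:
  assumes "p permutes {..<n}"
  shows "(\<Sum>i<n. g (\<Sum>j<n. W (p i) j * x j)) = (\<Sum>k<n. g (\<Sum>j<n. W k j * x j))"
  using sum.permute[OF assms, of "\<lambda>k. g (\<Sum>j<n. W k j * x j)"] by (simp add: comp_def)

lemma sum_Bmul:
  assumes "p permutes {..<n}"
  shows "(\<Sum>i<n. Bmul n p x i) = (\<Sum>j<n. x j)"
proof -
  have "(\<Sum>i<n. Bmul n p x i) = (\<Sum>k<n. \<Sum>j<n. W k j * x j)"
    using sum_Bmul_permuted_rows[OF assms, of id x] by (simp add: Bmul_def)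
  also have "\<dots> = (\<Sum>j<n. (\<Sum>k<n. W k j) * x j)"
    by (subst sum.swap) (simp add: sum_distrib_right)
  also have "\<dots> = (\<Sum>j<n. x j)"
    by (simp add: W_column_sum)
  finally show ?thesis .
qed

lemma sum_sds_apply:
  "\<forall>p\<in>set ps. p permutes {..<n} \<Longrightarrow> (\<Sum>i<n. sds_apply n ps x i) = (\<Sum>j<n. x j)"
  by (induction ps) (auto simp: sds_apply_def sum_Bmul)

text \<open>Subtracting the row minorant \<open>m\<close> from \<open>W\<^sub>n\<close> does not change \<open>W\<^sub>n e\<close> when \<open>\<Sum> e = 0\<close>,
  and the remaining nonnegative matrix has column sums \<open>1 - 1/n\<close>.\<close>
lemma l1_dist_Bmul_le:
  assumes p: "p permutes {..<n}" and sums: "(\<Sum>j<n. u j) = (\<Sum>j<n. v j)"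
  shows "(\<Sum>i<n. \<bar>Bmul n p u i - Bmul n p v i\<bar>) \<le> (1 - 1 / real n) * (\<Sum>j<n. \<bar>u j - v j\<bar>)"
proof -
  define e where "e j = u j - v j" for j
  define m where "m k = (if k = 0 then 1 / real n else 0)" for k :: nat
  have e_sum: "(\<Sum>j<n. e j) = 0"
    using sums by (simp add: e_def sum_subtractf)
  have m_le: "m k \<le> W k j" if "j < n" for k j
    using that W_first_row_ge by (auto simp: m_def W_def)
  have row: "\<bar>\<Sum>j<n. W k j * e j\<bar> \<le> (\<Sum>j<n. (W k j - m k) * \<bar>e j\<bar>)" for k
  proof -
    have "(\<Sum>j<n. W k j * e j) = (\<Sum>j<n. (W k j - m k) * e j)"
      using e_sum by (simp add: left_diff_distrib sum_subtractf sum_distrib_left[symmetric])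
    also have "\<bar>\<dots>\<bar> \<le> (\<Sum>j<n. \<bar>(W k j - m k) * e j\<bar>)"
      by (rule sum_abs)
    also have "\<dots> = (\<Sum>j<n. (W k j - m k) * \<bar>e j\<bar>)"
      using m_le by (intro sum.cong) (auto simp: abs_mult)
    finally show ?thesis .
  qed
  have "(\<Sum>i<n. \<bar>Bmul n p u i - Bmul n p v i\<bar>) = (\<Sum>k<n. \<bar>\<Sum>j<n. W k j * e j\<bar>)"
    using sum_Bmul_permuted_rows[OF p, of abs e]
    by (simp add: Bmul_def e_def sum_subtractf right_diff_distrib)
  also have "\<dots> \<le> (\<Sum>k<n. \<Sum>j<n. (W k j - m k) * \<bar>e j\<bar>)"
    by (intro sum_mono row)
  also have "\<dots> = (\<Sum>j<n. ((\<Sum>k<n. W k j) - (\<Sum>k<n. m k)) * \<bar>e j\<bar>)"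
    by (subst sum.swap) (simp add: sum_distrib_right sum_subtractf left_diff_distrib)
  also have "\<dots> = (\<Sum>j<n. (1 - 1 / real n) * \<bar>e j\<bar>)"
    by (intro sum.cong) (auto simp: W_column_sum m_def sum.delta)
  finally show ?thesis
    by (simp add: e_def sum_distrib_left)
qed

lemma l1_dist_sds_apply_le:
  assumes ps: "\<forall>p\<in>set ps. p permutes {..<n}" and sums: "(\<Sum>j<n. u j) = (\<Sum>j<n. v j)"
    and "n > 0"
  shows "(\<Sum>i<n. \<bar>sds_apply n ps u i - sds_apply n ps v i\<bar>)
           \<le> (1 - 1 / real n) ^ length ps * (\<Sum>j<n. \<bar>u j - v j\<bar>)"
  using ps
proof (induction ps)
  case Nil
  then show ?case by (simp add: sds_apply_def)
next
  case (Cons p ps)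
  have "(\<Sum>i<n. \<bar>sds_apply n (p # ps) u i - sds_apply n (p # ps) v i\<bar>)
      \<le> (1 - 1 / real n) * (\<Sum>j<n. \<bar>sds_apply n ps u j - sds_apply n ps v j\<bar>)"
    unfolding sds_apply_def foldr_Cons comp_def
    using Cons.prems sums by (intro l1_dist_Bmul_le) (auto simp: sds_apply_def[symmetric] sum_sds_apply)
  also have "\<dots> \<le> (1 - 1 / real n) * ((1 - 1 / real n) ^ length ps * (\<Sum>j<n. \<bar>u j - v j\<bar>))"
    using Cons \<open>n > 0\<close> by (intro mult_left_mono) auto
  finally show ?case
    by (simp add: mult.assoc)
qed

lemma sds_apply_dist_le:
  assumes ps: "\<forall>p\<in>set ps. p permutes {..<n}" and "i < n"
    and u: "\<forall>j<n. 0 \<le> u j" "(\<Sum>j<n. u j) = 1"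
    and v: "\<forall>j<n. 0 \<le> v j" "(\<Sum>j<n. v j) = 1"
  shows "\<bar>sds_apply n ps u i - sds_apply n ps v i\<bar> \<le> 2 * (1 - 1 / real n) ^ length ps"
proof -
  have "n > 0"
    using u(2) by (cases n) auto
  have "(\<Sum>j<n. \<bar>u j - v j\<bar>) \<le> (\<Sum>j<n. u j + v j)"
    using u(1) v(1) by (intro sum_mono) (simp add: abs_le_iff)
  also have "\<dots> = 2"
    using u(2) v(2) by (simp add: sum.distrib)
  finally have uv: "(\<Sum>j<n. \<bar>u j - v j\<bar>) \<le> 2" .
  have "\<bar>sds_apply n ps u i - sds_apply n ps v i\<bar> \<le> (\<Sum>i<n. \<bar>sds_apply n ps u i - sds_apply n ps v i\<bar>)"
    using \<open>i < n\<close> by (intro member_le_sum) auto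
  also have "\<dots> \<le> (1 - 1 / real n) ^ length ps * (\<Sum>j<n. \<bar>u j - v j\<bar>)"
    using ps u(2) v(2) \<open>n > 0\<close> by (intro l1_dist_sds_apply_le) auto
  also have "\<dots> \<le> (1 - 1 / real n) ^ length ps * 2"
    using uv \<open>n > 0\<close> by (intro mult_left_mono) auto
  finally show ?thesis
    by simp
qed

text \<open>Given \<open>z\<close> sorted decreasingly by \<open>p\<close>, the preimage is \<open>x\<^sub>j = (j + 1)(y\<^sub>j - y\<^sub>j\<^sub>+\<^sub>1)\<close> with
  \<open>y = z \<circ> p\<close> (and \<open>y\<^sub>n = 0\<close>), since row \<open>k\<close> of \<open>W\<^sub>n x\<close> then telescopes to \<open>y\<^sub>k\<close>.\<close>
lemma Bmul_onto_simplex: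
  assumes z: "z \<in> simplex n"
  obtains q x where "q permutes {..<n}" "x \<in> simplex n" "Bmul n q x = z"
proof -
  have z_nonneg: "\<And>i. i < n \<Longrightarrow> 0 \<le> z i" and z_sum: "(\<Sum>i<n. z i) = 1"
    and z_out: "\<And>i. n \<le> i \<Longrightarrow> z i = 0"
    using z by (auto simp: simplex_def)
  define zs where "zs = map z [0..<n]"
  define sorted_zs where "sorted_zs = rev (sort zs)"
  have "mset sorted_zs = mset zs"
    by (simp add: sorted_zs_def)
  then obtain p where p: "p permutes {..<length zs}" "permute_list p zs = sorted_zs"
    using mset_eq_permutation by metis
  have pn: "p permutes {..<n}"
    using p(1) by (simp add: zs_def)
  have sorted_zs_nth: "sorted_zs ! k = z (p k)" if "k < n" for k
    using permute_list_nth[of p zs k] p that permutes_in_image[OF pn, of k]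
    by (simp add: zs_def)
  define y where "y k = (if k < n then z (p k) else 0)" for k
  have y_sorted: "y k' \<le> y k" if "k \<le> k'" for k k'
  proof (cases "k' < n")
    case True
    then have "y k = sorted_zs ! k" "y k' = sorted_zs ! k'"
      using that by (simp_all add: y_def sorted_zs_nth)
    moreover have "sorted_zs ! k' \<le> sorted_zs ! k"
      using that True by (simp add: sorted_zs_def zs_def rev_nth sorted_nth_mono)
    ultimately show ?thesis
      by simp
  next
    case False
    then show ?thesis
      using z_nonneg permutes_in_image[OF pn, of k] by (simp add: y_def)
  qed
  define x where "x j = (if j < n then real (j + 1) * (y j - y (Suc j)) else 0)" for j
  have Wx: "(\<Sum>j<n. W k j * x j) = y k" if "k < n" for k
  proof -
    have "(\<Sum>j<n. W k j * x j) = (\<Sum>j\<in>{k..<n}. y j - y (Suc j))"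
      by (rule sum.mono_neutral_cong_right) (auto simp: W_def x_def)
    also have "\<dots> = - (\<Sum>j\<in>{k..<n}. y (Suc j) - y j)"
      by (simp add: sum_negf[symmetric])
    also have "\<dots> = y k - y n"
      using that by (subst sum_Suc_diff') simp_all
    finally show ?thesis
      by (simp add: y_def)
  qed
  have q: "inv p permutes {..<n}"
    using pn by (rule permutes_inv)
  have Bx: "Bmul n (inv p) x = z"
  proof
    fix i
    show "Bmul n (inv p) x i = z i"
    proof (cases "i < n")
      case True
      then have "inv p i < n"
        using permutes_in_image[OF q] by simp
      then show ?thesis
        using True Wx by (simp add: Bmul_def y_def permutes_inverses(1)[OF pn])
    qed (simp add: Bmul_def z_out)
  qed
  have "x \<in> simplex n"
    using y_sorted sum_Bmul[OF q, of x] z_sum unfolding simplex_def Bx by (auto simp: x_def)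
  with q Bx show ?thesis
    using that by blast
qed

lemma sds_apply_onto_simplex:
  assumes "z \<in> simplex n"
  obtains ps v where "length ps = m" "\<forall>p\<in>set ps. p permutes {..<n}" "v \<in> simplex n"
    "sds_apply n ps v = z"
proof (induction m arbitrary: thesis)
  case 0
  then show ?case
    using assms by (auto simp: sds_apply_def)
next
  case (Suc m)
  obtain ps v where ps: "length ps = m" "\<forall>p\<in>set ps. p permutes {..<n}" "v \<in> simplex n"
    "sds_apply n ps v = z"
    using Suc.IH by blast
  obtain q x where "q permutes {..<n}" "x \<in> simplex n" "Bmul n q x = v"
    using Bmul_onto_simplex[OF ps(3)] .
  then show ?case
    using ps by (intro Suc.prems[of "ps @ [q]" x]) (auto simp: sds_apply_def)
qed

lemma LIMSEQ_geometric_bound: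
  fixes a :: "nat \<Rightarrow> real"
  assumes bound: "\<And>m. \<bar>a m - y\<bar> \<le> C * r ^ m" and "0 \<le> r" "r < 1"
  shows "a \<longlonglongrightarrow> y"
proof -
  have "(\<lambda>m. r ^ m) \<longlonglongrightarrow> 0"
    using assms(2,3) by (intro LIMSEQ_power_zero) simp
  then have C: "(\<lambda>m. C * r ^ m) \<longlonglongrightarrow> 0"
    by (rule tendsto_mult_right_zero)
  have two_sided: "- (C * r ^ m) \<le> a m - y \<and> a m - y \<le> C * r ^ m" for m
    using bound[of m] by (simp add: abs_le_iff)
  have "(\<lambda>m. a m - y) \<longlonglongrightarrow> 0"
    by (rule tendsto_sandwich[OF _ _ tendsto_minus[OF C, simplified] C])
      (simp_all add: two_sided always_eventually)
  then show ?thesis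
    by (rule LIM_zero_cancel)
qed

lemma sds_apply_barycenter_tendsto:
  assumes Y: "Y \<in> simplex n"
  obtains PS where "\<And>m. length (PS m) = m" "\<And>m. \<forall>p\<in>set (PS m). p permutes {..<n}"
    "\<And>i. i < n \<Longrightarrow> (\<lambda>m. sds_apply n (PS m) (\<lambda>_. 1 / real n) i) \<longlonglongrightarrow> Y i"
proof -
  have "n > 0"
    using Y by (cases n) (auto simp: simplex_def)
  have "\<forall>m. \<exists>ps v. length ps = m \<and> (\<forall>p\<in>set ps. p permutes {..<n}) \<and> v \<in> simplex n
             \<and> sds_apply n ps v = Y"
    by (metis sds_apply_onto_simplex[OF Y])
  then obtain PS V where PS: "\<And>m. length (PS m) = m" "\<And>m. \<forall>p\<in>set (PS m). p permutes {..<n}"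
    and V: "\<And>m. V m \<in> simplex n" "\<And>m. sds_apply n (PS m) (V m) = Y"
    by metis
  have "(\<lambda>m. sds_apply n (PS m) (\<lambda>_. 1 / real n) i) \<longlonglongrightarrow> Y i" if "i < n" for i
  proof (rule LIMSEQ_geometric_bound)
    show "\<bar>sds_apply n (PS m) (\<lambda>_. 1 / real n) i - Y i\<bar> \<le> 2 * (1 - 1 / real n) ^ m" for m
      using sds_apply_dist_le[OF PS(2)[of m] \<open>i < n\<close>, of "\<lambda>_. 1 / real n" "V m"] V[of m] PS(1) \<open>n > 0\<close>
      by (simp add: simplex_def)
  qed (use \<open>n > 0\<close> in auto)
  with PS that show ?thesis
    by blast
qed

lemma Bmul_scale: "Bmul n p (\<lambda>i. a * x i) = (\<lambda>i. a * Bmul n p x i)"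
  by (auto simp: Bmul_def sum_distrib_left algebra_simps)

lemma sds_apply_scale: "sds_apply n ps (\<lambda>i. a * x i) = (\<lambda>i. a * sds_apply n ps x i)"
  by (induction ps) (simp_all add: sds_apply_def Bmul_scale)

lemma is_form_homogeneous:
  assumes "is_form n d F"
  shows "F (\<lambda>i. a * x i) = a ^ d * F x"
proof -
  obtain S c where S: "\<forall>\<alpha>\<in>S. (\<forall>i\<ge>n. \<alpha> i = 0) \<and> (\<Sum>i<n. \<alpha> i) = d"
    and F: "\<And>x. F x = (\<Sum>\<alpha>\<in>S. c \<alpha> * (\<Prod>i<n. x i ^ \<alpha> i))"
    using assms unfolding is_form_def by blast
  have "F (\<lambda>i. a * x i) = (\<Sum>\<alpha>\<in>S. c \<alpha> * (a ^ (\<Sum>i<n. \<alpha> i) * (\<Prod>i<n. x i ^ \<alpha> i)))"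
    by (simp add: F power_mult_distrib prod.distrib power_sum)
  also have "\<dots> = a ^ d * F x"
    using S by (simp add: F sum_distrib_left mult.left_commute)
  finally show ?thesis .
qed

lemma is_form_tendsto:
  assumes "is_form n d F" and "\<And>i. i < n \<Longrightarrow> (\<lambda>m. a m i) \<longlonglongrightarrow> y i"
  shows "(\<lambda>m. F (a m)) \<longlonglongrightarrow> F y"
proof -
  obtain S c where F: "\<And>x. F x = (\<Sum>\<alpha>\<in>S. c \<alpha> * (\<Prod>i<n. x i ^ \<alpha> i))"
    using assms(1) unfolding is_form_def by blast
  show ?thesis
    unfolding F by (intro tendsto_sum tendsto_mult tendsto_const tendsto_prod tendsto_power assms(2)) auto
qed

theorem theorem5p1:
  fixes n d :: nat and F :: "(nat \<Rightarrow> real) \<Rightarrow> real"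
  assumes "is_form n d F"
    and "\<exists>X\<in>simplex n. F X > 0"
    and "\<exists>Y\<in>simplex n. F Y < 0"
  shows "\<exists>k>0. \<exists>G\<in>SDS n k F. G (\<lambda>_. 1) < 0"
proof -
  obtain Y where Y: "Y \<in> simplex n" "F Y < 0"
    using assms(3) by blast
  then have "n > 0"
    by (cases n) (auto simp: simplex_def)
  obtain PS where PS: "\<And>m. length (PS m) = m" "\<And>m. \<forall>p\<in>set (PS m). p permutes {..<n}"
    and lim: "\<And>i. i < n \<Longrightarrow> (\<lambda>m. sds_apply n (PS m) (\<lambda>_. 1 / real n) i) \<longlonglongrightarrow> Y i"
    using sds_apply_barycenter_tendsto[OF Y(1)] by blast
  have "\<forall>\<^sub>F m in sequentially. F (sds_apply n (PS m) (\<lambda>_. 1 / real n)) < 0 \<and> 0 < m"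
    using order_tendstoD(2)[OF is_form_tendsto[OF assms(1) lim] Y(2)] eventually_gt_at_top[of 0]
    by (rule eventually_conj)
  then obtain m where m: "F (sds_apply n (PS m) (\<lambda>_. 1 / real n)) < 0" "0 < m"
    by (auto dest: eventually_happens)
  define G where "G = (\<lambda>x. F (sds_apply n (PS m) x))"
  have "G \<in> SDS n m F"
    using PS by (auto simp: SDS_def G_def)
  moreover have "G (\<lambda>_. 1) = real n ^ d * F (sds_apply n (PS m) (\<lambda>_. 1 / real n))"
  proof -
    have one: "(\<lambda>_::nat. 1::real) = (\<lambda>i. real n * (1 / real n))"
      using \<open>n > 0\<close> by simp
    show ?thesis
      unfolding G_def one sds_apply_scale by (rule is_form_homogeneous[OF assms(1)])
  qed
  ultimately show ?thesis
    using m \<open>n > 0\<close> by (intro exI[of _ m] conjI bexI[of _ G]) (auto simp: mult_pos_neg)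
qed

end
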